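(* Let $G$ be a countable infinite discrete group, $X$ an infinite compact Hausdorff space and $\alpha: G\curvearrowright X$ a continuous action with dynamical comparison such that there is no $G$-invariant regular Borel probability measure on $X$. Let $\phi\in C(X)$ be a non-zero positive function. Then there is an isometry $v\in C(X)\rtimes_r G$ such that $vv^\ast$ lies in the hereditary $C^\ast$-subalgebra of $C(X)\rtimes_r G$ generated by $\phi$.
   Context: Subequivalence: for closed $F$ and open $O$ in $X$, $F\prec O$ if there exist a finite open cover $\mathcal{U}$ of $F$ and $s_U\in G$ with the sets $s_UU$ pairwise disjoint subsets of $O$; for open $V$, $V\prec O$ means $F\prec O$ for all closed $F\subset V$. Dynamical comparison: $V\prec O$ for every open $V$ and nonempty open $O$ with $\mu(V)<\mu(O)$ for all $G$-invariant regular Borel probability measures $\mu$ (so here: $V\prec O$ for all open $V$ and nonempty open $O$). *)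

theory Defs
  imports "HOL-Analysis.Analysis" "HOL-Probability.Probability"
begin

text \<open>A continuous action of a (discrete) group, written additively (group_add is not
  assumed commutative) on a topological space.\<close>
definition cont_action :: "('g::group_add \<Rightarrow> 'x::topological_space \<Rightarrow> 'x) \<Rightarrow> bool" where
  "cont_action \<alpha> \<longleftrightarrow> \<alpha> 0 = id \<and> (\<forall>g h. \<alpha> (g + h) = \<alpha> g \<circ> \<alpha> h)
     \<and> (\<forall>g. continuous_on UNIV (\<alpha> g))"

definition subeq_closed :: "('g::group_add \<Rightarrow> 'x::topological_space \<Rightarrow> 'x) \<Rightarrow> 'x set \<Rightarrow> 'x set \<Rightarrow> bool" where
  "subeq_closed \<alpha> F W \<longleftrightarrow> (\<exists>UU s. finite UU \<and> (\<forall>U\<in>UU. open U) \<and> F \<subseteq> \<Union>UU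
      \<and> (\<forall>U\<in>UU. \<alpha> (s U) ` U \<subseteq> W)
      \<and> (\<forall>U\<in>UU. \<forall>U'\<in>UU. U \<noteq> U' \<longrightarrow> \<alpha> (s U) ` U \<inter> \<alpha> (s U') ` U' = {}))"

definition subeq_open :: "('g::group_add \<Rightarrow> 'x::topological_space \<Rightarrow> 'x) \<Rightarrow> 'x set \<Rightarrow> 'x set \<Rightarrow> bool" where
  "subeq_open \<alpha> V W \<longleftrightarrow> (\<forall>F. closed F \<and> F \<subseteq> V \<longrightarrow> subeq_closed \<alpha> F W)"

definition regular_borel_prob :: "'x::topological_space measure \<Rightarrow> bool" where
  "regular_borel_prob M \<longleftrightarrow> sets M = sets borel \<and> prob_space M
     \<and> (\<forall>A\<in>sets borel.
          measure M A = Inf {measure M U | U. open U \<and> A \<subseteq> U}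
        \<and> measure M A = Sup {measure M K | K. compact K \<and> K \<subseteq> A})"

definition invariant_measure :: "('g \<Rightarrow> 'x \<Rightarrow> 'x) \<Rightarrow> 'x::topological_space measure \<Rightarrow> bool" where
  "invariant_measure \<alpha> M \<longleftrightarrow> (\<forall>g. \<forall>A\<in>sets borel. measure M (\<alpha> g -` A) = measure M A)"

definition dyn_comparison :: "('g::group_add \<Rightarrow> 'x::topological_space \<Rightarrow> 'x) \<Rightarrow> bool" where
  "dyn_comparison \<alpha> \<longleftrightarrow> (\<forall>V W. open V \<and> open W \<and> W \<noteq> {}
      \<and> (\<forall>M. regular_borel_prob M \<and> invariant_measure \<alpha> M \<longrightarrow> measure M V < measure M W)
      \<longrightarrow> subeq_open \<alpha> V W)"

text \<open>We realise C(X) \<rtimes>_r G faithfully as operators on the direct sum over x \<in> X of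
  copies of \<ell>^2(G), namely the direct sum of the regular representations induced from the
  point evaluations ev_x (a faithful representation of C(X)).  An operator is given by
  its matrix kernel K x g h (the (g,h)-entry of the operator acting on the x-th copy).
  In fibre x, \<pi>(f) acts by (\<pi>(f)\<xi>)(g) = f(\<alpha> g x) \<xi>(g) and \<lambda>_s by (\<lambda>_s \<xi>)(g) = \<xi>(-s+g).\<close>

type_synonym ('g, 'x) kernel = "'x \<Rightarrow> 'g \<Rightarrow> 'g \<Rightarrow> complex"

definition fin_unit :: "('g \<Rightarrow> complex) \<Rightarrow> bool" where
  "fin_unit \<xi> \<longleftrightarrow> finite {g. \<xi> g \<noteq> 0} \<and> (\<Sum>g\<in>{g. \<xi> g \<noteq> 0}. (cmod (\<xi> g))\<^sup>2) \<le> 1"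

definition kform :: "('g, 'x) kernel \<Rightarrow> 'x \<Rightarrow> ('g \<Rightarrow> complex) \<Rightarrow> ('g \<Rightarrow> complex) \<Rightarrow> complex" where
  "kform K x \<eta> \<xi> = (\<Sum>g\<in>{g. \<eta> g \<noteq> 0}. \<Sum>h\<in>{h. \<xi> h \<noteq> 0}. cnj (\<eta> g) * K x g h * \<xi> h)"

definition kvals :: "('g, 'x) kernel \<Rightarrow> real set" where
  "kvals K = {cmod (kform K x \<eta> \<xi>) | x \<eta> \<xi>. fin_unit \<eta> \<and> fin_unit \<xi>}"

definition kbounded :: "('g, 'x) kernel \<Rightarrow> bool" where
  "kbounded K \<longleftrightarrow> bdd_above (kvals K)"

definition knorm :: "('g, 'x) kernel \<Rightarrow> real" where
  "knorm K = Sup (kvals K)"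

definition kadd :: "('g, 'x) kernel \<Rightarrow> ('g, 'x) kernel \<Rightarrow> ('g, 'x) kernel" where
  "kadd K L = (\<lambda>x g h. K x g h + L x g h)"

definition ksub :: "('g, 'x) kernel \<Rightarrow> ('g, 'x) kernel \<Rightarrow> ('g, 'x) kernel" where
  "ksub K L = (\<lambda>x g h. K x g h - L x g h)"

definition kmult :: "('g, 'x) kernel \<Rightarrow> ('g, 'x) kernel \<Rightarrow> ('g, 'x) kernel" where
  "kmult K L = (\<lambda>x g h. \<Sum>\<^sub>\<infinity>k. K x g k * L x k h)"

definition kadj :: "('g, 'x) kernel \<Rightarrow> ('g, 'x) kernel" where
  "kadj K = (\<lambda>x g h. cnj (K x h g))"

definition kid :: "('g, 'x) kernel" where
  "kid = (\<lambda>x g h. if g = h then 1 else 0)"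

definition kfun :: "('g \<Rightarrow> 'x \<Rightarrow> 'x) \<Rightarrow> ('x \<Rightarrow> complex) \<Rightarrow> ('g, 'x) kernel" where
  "kfun \<alpha> f = (\<lambda>x g h. if g = h then f (\<alpha> g x) else 0)"

text \<open>The algebraic crossed product: finite sums \<Sum>_s \<pi>(F s) \<lambda>_s with F s \<in> C(X).\<close>
definition cp_alg :: "('g::group_add \<Rightarrow> 'x::topological_space \<Rightarrow> 'x) \<Rightarrow> ('g, 'x) kernel set" where
  "cp_alg \<alpha> = {(\<lambda>x g h. F (g - h) (\<alpha> g x)) | F.
      finite {s. F s \<noteq> (\<lambda>_. 0)} \<and> (\<forall>s. continuous_on UNIV (F s))}"

definition crossed_prod :: "('g::group_add \<Rightarrow> 'x::topological_space \<Rightarrow> 'x) \<Rightarrow> ('g, 'x) kernel set" where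
  "crossed_prod \<alpha> = {K. kbounded K \<and> (\<forall>\<epsilon>>0. \<exists>L\<in>cp_alg \<alpha>. knorm (ksub K L) < \<epsilon>)}"

definition cstar_subalg :: "('g, 'x) kernel set \<Rightarrow> ('g, 'x) kernel set \<Rightarrow> bool" where
  "cstar_subalg A B \<longleftrightarrow> B \<subseteq> A
     \<and> (\<forall>a\<in>B. \<forall>b\<in>B. kadd a b \<in> B \<and> kmult a b \<in> B)
     \<and> (\<forall>c::complex. \<forall>a\<in>B. (\<lambda>x g h. c * a x g h) \<in> B)
     \<and> (\<forall>a\<in>B. kadj a \<in> B)
     \<and> (\<forall>a\<in>A. (\<forall>\<epsilon>>0. \<exists>b\<in>B. knorm (ksub a b) < \<epsilon>) \<longrightarrow> a \<in> B)"

definition kpos :: "('g, 'x) kernel set \<Rightarrow> ('g, 'x) kernel \<Rightarrow> bool" where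
  "kpos A a \<longleftrightarrow> (\<exists>c\<in>A. a = kmult (kadj c) c)"

definition hereditary_subalg :: "('g, 'x) kernel set \<Rightarrow> ('g, 'x) kernel set \<Rightarrow> bool" where
  "hereditary_subalg A B \<longleftrightarrow> cstar_subalg A B
     \<and> (\<forall>a\<in>A. \<forall>b\<in>B. kpos A a \<and> kpos A (ksub b a) \<longrightarrow> a \<in> B)"

definition hereditary_gen :: "('g, 'x) kernel set \<Rightarrow> ('g, 'x) kernel \<Rightarrow> ('g, 'x) kernel set" where
  "hereditary_gen A p = \<Inter>{B. hereditary_subalg A B \<and> p \<in> B}"

end

theory Submission
  imports Defs
begin

(* With no invariant measure, dynamical comparison gives X \<prec> W for the nonempty open set
   W = {\<phi> > \<delta>}: finitely many open sets U cover X and their translates s_U U are pairwise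
   disjoint subsets of W.  A partition of unity \<Sum> h_U^2 = 1 subordinate to this cover yields
   v = \<Sum> \<pi>(h_U \<circ> \<alpha>(-s_U)) \<lambda>_{s_U}; disjointness of the translates makes v^* v = 1, and
   the projection p = v v^* lives over W.  There f = min 1 (\<phi>/\<delta>) equals 1, so
   \<pi>(f) - p = (\<pi>(\<surd>f) - p)^2 and \<pi>(\<phi>)/\<delta> - \<pi>(f) are positive, i.e.
   0 \<le> p \<le> \<pi>(f) \<le> \<pi>(\<phi>)/\<delta>, which puts p into the hereditary subalgebra generated by \<pi>(\<phi>). *)

section \<open>Kernels of finite propagation\<close>

lemma diff_uminus_add_cancel: "g - (- s + g) = (s::'g::group_add)"
  by (metis add_minus_cancel diff_conv_add_uminus minus_add minus_minus)

lemma vimage_diff_left: "{k. g - k \<in> S} = (\<lambda>s. - s + g) ` (S :: 'g::group_add set)"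
proof (intro set_eqI iffI)
  fix k assume "k \<in> {k. g - k \<in> S}"
  then show "k \<in> (\<lambda>s. - s + g) ` S"
    by (intro image_eqI[of _ _ "g - k"]) simp_all
qed (auto simp: diff_uminus_add_cancel)

lemma vimage_diff_right: "{k. k - h \<in> S} = (\<lambda>s. s + h) ` (S :: 'g::group_add set)"
proof (intro set_eqI iffI)
  fix k assume "k \<in> {k. k - h \<in> S}"
  then show "k \<in> (\<lambda>s. s + h) ` S"
    by (intro image_eqI[of _ _ "k - h"]) simp_all
qed auto

definition kband :: "('g::group_add, 'x) kernel \<Rightarrow> 'g set \<Rightarrow> bool" where
  "kband K S \<longleftrightarrow> finite S \<and> (\<forall>x g h. K x g h \<noteq> 0 \<longrightarrow> g - h \<in> S)"

lemma kband_finite_left: "kband K S \<Longrightarrow> finite {k. g - k \<in> S}"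
  unfolding kband_def vimage_diff_left by simp

lemma kband_finite_right: "kband K S \<Longrightarrow> finite {k. k - h \<in> S}"
  unfolding kband_def vimage_diff_right by simp

lemma kband_mono: "kband K S \<Longrightarrow> S \<subseteq> T \<Longrightarrow> finite T \<Longrightarrow> kband K T"
  by (auto simp: kband_def)

lemma kmult_eq_sum:
  assumes "finite A" "\<And>k. k \<notin> A \<Longrightarrow> K x g k * L x k h = 0"
  shows "kmult K L x g h = (\<Sum>k\<in>A. K x g k * L x k h)"
proof -
  have "(\<Sum>\<^sub>\<infinity>k. K x g k * L x k h) = (\<Sum>\<^sub>\<infinity>k\<in>A. K x g k * L x k h)"
    by (rule infsum_cong_neutral) (use assms in auto)
  then show ?thesis using assms(1) by (simp add: kmult_def)
qed

lemma kmult_kband_left: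
  assumes "kband K S" "finite A" "{k. g - k \<in> S} \<subseteq> A"
  shows "kmult K L x g h = (\<Sum>k\<in>A. K x g k * L x k h)"
  using assms by (intro kmult_eq_sum) (auto simp: kband_def)

lemma kmult_kband_right:
  assumes "kband L S" "finite A" "{k. k - h \<in> S} \<subseteq> A"
  shows "kmult K L x g h = (\<Sum>k\<in>A. K x g k * L x k h)"
  using assms by (intro kmult_eq_sum) (auto simp: kband_def)

lemma kmult_nonzero:
  assumes "kband K S" "kmult K L x g h \<noteq> 0"
  obtains k where "K x g k \<noteq> 0" "L x k h \<noteq> 0"
proof -
  have "kmult K L x g h = (\<Sum>k\<in>{k. g - k \<in> S}. K x g k * L x k h)"
    using assms(1) by (intro kmult_kband_left kband_finite_left) auto
  with assms(2) have "\<exists>k. K x g k * L x k h \<noteq> 0"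
    using sum.neutral[of "{k. g - k \<in> S}" "\<lambda>k. K x g k * L x k h"] by auto
  with that show ?thesis by auto
qed

lemma kband_kmult:
  assumes "kband K S" "kband L T"
  shows "kband (kmult K L) ((\<lambda>(s, t). s + t) ` (S \<times> T))"
  unfolding kband_def
proof (intro conjI allI impI)
  show "finite ((\<lambda>(s, t). s + t) ` (S \<times> T))" using assms by (simp add: kband_def)
  fix x g h assume "kmult K L x g h \<noteq> 0"
  with assms(1) obtain k where "K x g k \<noteq> 0" "L x k h \<noteq> 0" by (rule kmult_nonzero)
  then have "g - k \<in> S" "k - h \<in> T" using assms by (auto simp: kband_def)
  moreover have "g - h = (g - k) + (k - h)" by (simp add: algebra_simps)
  ultimately show "g - h \<in> (\<lambda>(s, t). s + t) ` (S \<times> T)"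
    by (intro image_eqI[of _ _ "(g - k, k - h)"]) simp_all
qed

lemma kband_kadj: "kband K S \<Longrightarrow> kband (kadj K) (uminus ` S)"
  unfolding kband_def kadj_def by (auto simp: image_iff) (metis minus_diff_eq)

lemma kband_ksub: "kband K S \<Longrightarrow> kband L T \<Longrightarrow> kband (ksub K L) (S \<union> T)"
  unfolding kband_def ksub_def by (metis (mono_tags) UnCI diff_zero finite_UnI)

lemma kband_kfun: "kband (kfun \<alpha> f) {0}"
  unfolding kband_def kfun_def by auto

lemma kmult_assoc:
  assumes "kband K S" "kband N U"
  shows "kmult (kmult K L) N = kmult K (kmult L N)"
proof (intro ext)
  fix x g h
  define A where "A = {k. g - k \<in> S}"
  define B where "B = {k. k - h \<in> U}"
  have A: "finite A" and B: "finite B"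
    using assms by (auto simp: A_def B_def kband_finite_left kband_finite_right)
  have "kmult (kmult K L) N x g h = (\<Sum>k\<in>B. kmult K L x g k * N x k h)"
    using assms(2) B by (rule kmult_kband_right) (simp add: B_def)
  also have "\<dots> = (\<Sum>k\<in>B. (\<Sum>l\<in>A. K x g l * L x l k) * N x k h)"
    using assms(1) A by (simp add: kmult_kband_left[of K S A] A_def)
  also have "\<dots> = (\<Sum>l\<in>A. K x g l * (\<Sum>k\<in>B. L x l k * N x k h))"
    by (simp add: sum_distrib_left sum_distrib_right mult.assoc sum.swap[of _ B A])
  also have "\<dots> = (\<Sum>l\<in>A. K x g l * kmult L N x l h)"
    using assms(2) B by (simp add: kmult_kband_right[of N U B] B_def)
  also have "\<dots> = kmult K (kmult L N) x g h"
    using assms(1) A by (rule kmult_kband_left[symmetric]) (simp add: A_def)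
  finally show "kmult (kmult K L) N x g h = kmult K (kmult L N) x g h" .
qed

lemma kadj_kadj [simp]: "kadj (kadj K) = K"
  by (simp add: kadj_def)

lemma kadj_ksub: "kadj (ksub K L) = ksub (kadj K) (kadj L)"
  by (simp add: kadj_def ksub_def)

lemma kadj_kmult:
  assumes "kband K S"
  shows "kadj (kmult K L) = kmult (kadj L) (kadj K)"
proof (intro ext)
  fix x g h
  define A where "A = {k. h - k \<in> S}"
  have A: "finite A" using assms by (simp add: A_def kband_finite_left)
  have "kadj (kmult K L) x g h = cnj (\<Sum>k\<in>A. K x h k * L x k g)"
    unfolding kadj_def using assms A by (subst kmult_kband_left[of K S A]) (auto simp: A_def)
  also have "\<dots> = (\<Sum>k\<in>A. kadj L x g k * kadj K x k h)"
    by (simp add: kadj_def mult.commute)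
  also have "\<dots> = kmult (kadj L) (kadj K) x g h"
    using kband_kadj[OF assms] A
    by (rule kmult_kband_right[symmetric]) (auto simp: A_def image_iff, metis minus_diff_eq minus_minus)
  finally show "kadj (kmult K L) x g h = kmult (kadj L) (kadj K) x g h" .
qed

lemma kmult_ksub_left:
  assumes "kband K S" "kband L T"
  shows "kmult (ksub K L) N = ksub (kmult K N) (kmult L N)"
proof (intro ext)
  fix x g h
  define A where "A = {k. g - k \<in> S \<union> T}"
  have fin: "finite (S \<union> T)" and A: "finite A"
    using assms by (auto simp: A_def kband_def vimage_diff_left)
  have "kband (ksub K L) (S \<union> T)" "kband K (S \<union> T)" "kband L (S \<union> T)"
    using kband_ksub[OF assms] kband_mono[OF assms(1) _ fin] kband_mono[OF assms(2) _ fin] by auto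
  from this[THEN kmult_kband_left, OF A] show "kmult (ksub K L) N x g h = ksub (kmult K N) (kmult L N) x g h"
    by (simp add: A_def ksub_def left_diff_distrib sum_subtractf)
qed

lemma kmult_ksub_right:
  assumes "kband L T" "kband N U"
  shows "kmult K (ksub L N) = ksub (kmult K L) (kmult K N)"
proof (intro ext)
  fix x g h
  define A where "A = {k. k - h \<in> T \<union> U}"
  have fin: "finite (T \<union> U)" and A: "finite A"
    using assms by (auto simp: A_def kband_def vimage_diff_right)
  have "kband (ksub L N) (T \<union> U)" "kband L (T \<union> U)" "kband N (T \<union> U)"
    using kband_ksub[OF assms] kband_mono[OF assms(1) _ fin] kband_mono[OF assms(2) _ fin] by auto
  from this[THEN kmult_kband_right, OF A] show "kmult K (ksub L N) x g h = ksub (kmult K L) (kmult K N) x g h"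
    by (simp add: A_def ksub_def right_diff_distrib sum_subtractf)
qed

lemma kmult_kfun_left: "kmult (kfun \<alpha> w) K = (\<lambda>x g h. w (\<alpha> g x) * K x g h)"
proof (intro ext)
  fix x g h
  have "kmult (kfun \<alpha> w) K x g h = (\<Sum>k\<in>{g}. kfun \<alpha> w x g k * K x k h)"
    by (rule kmult_eq_sum) (auto simp: kfun_def)
  then show "kmult (kfun \<alpha> w) K x g h = w (\<alpha> g x) * K x g h" by (simp add: kfun_def)
qed

lemma kmult_kfun_right: "kmult K (kfun \<alpha> w) = (\<lambda>x g h. K x g h * w (\<alpha> h x))"
proof (intro ext)
  fix x g h
  have "kmult K (kfun \<alpha> w) x g h = (\<Sum>k\<in>{h}. K x g k * kfun \<alpha> w x k h)"
    by (rule kmult_eq_sum) (auto simp: kfun_def)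
  then show "kmult K (kfun \<alpha> w) x g h = K x g h * w (\<alpha> h x)" by (simp add: kfun_def)
qed

lemma kmult_kfun_kfun: "kmult (kfun \<alpha> a) (kfun \<alpha> b) = kfun \<alpha> (\<lambda>y. a y * b y)"
  unfolding kmult_kfun_left by (auto simp: kfun_def fun_eq_iff)

lemma kadj_kfun: "kadj (kfun \<alpha> a) = kfun \<alpha> (\<lambda>y. cnj (a y))"
  by (auto simp: kadj_def kfun_def fun_eq_iff)

lemma kmult_kid_left: "kmult kid K = K"
proof (intro ext)
  fix x g h
  have "kmult kid K x g h = (\<Sum>k\<in>{g}. kid x g k * K x k h)"
    by (rule kmult_eq_sum) (auto simp: kid_def)
  then show "kmult kid K x g h = K x g h" by (simp add: kid_def)
qed

lemma sum_sum_if_le_card: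
  fixes a :: "'a \<Rightarrow> real"
  assumes "finite E" "finite D" "\<And>g. 0 \<le> a g" "\<And>g. card {h\<in>D. P g h} \<le> n"
  shows "(\<Sum>g\<in>E. \<Sum>h\<in>D. if P g h then a g else 0) \<le> n * sum a E"
proof -
  have "(\<Sum>g\<in>E. \<Sum>h\<in>D. if P g h then a g else 0) = (\<Sum>g\<in>E. card {h\<in>D. P g h} * a g)"
    using assms(2) by (simp add: sum.If_cases Int_def)
  also have "\<dots> \<le> (\<Sum>g\<in>E. n * a g)"
    using assms(3,4) by (intro sum_mono mult_right_mono) simp_all
  finally show ?thesis by (simp add: sum_distrib_left)
qed

lemma card_diff_left_le: "finite S \<Longrightarrow> card {h\<in>D. g - h \<in> S} \<le> card (S :: 'g::group_add set)"
proof -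
  assume "finite S"
  have "card {h\<in>D. g - h \<in> S} \<le> card ((\<lambda>s. - s + g) ` S)"
    using \<open>finite S\<close> by (intro card_mono finite_imageI) (auto simp flip: vimage_diff_left)
  also have "\<dots> \<le> card S" by (rule card_image_le[OF \<open>finite S\<close>])
  finally show ?thesis .
qed

lemma card_diff_right_le: "finite S \<Longrightarrow> card {g\<in>E. g - h \<in> S} \<le> card (S :: 'g::group_add set)"
proof -
  assume "finite S"
  have "card {g\<in>E. g - h \<in> S} \<le> card ((\<lambda>s. s + h) ` S)"
    using \<open>finite S\<close> by (intro card_mono finite_imageI) (auto simp flip: vimage_diff_right)
  also have "\<dots> \<le> card S" by (rule card_image_le[OF \<open>finite S\<close>])
  finally show ?thesis .
qed

lemma norm_cnj_mult_mult_le: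
  assumes "cmod k \<le> M"
  shows "cmod (cnj a * k * b) \<le> M / 2 * (cmod a)\<^sup>2 + M / 2 * (cmod b)\<^sup>2"
proof -
  have M: "0 \<le> M" using assms norm_ge_zero order_trans by blast
  have "cmod (cnj a * k * b) = cmod a * cmod k * cmod b" by (simp add: norm_mult)
  also have "\<dots> \<le> cmod a * M * cmod b" by (intro mult_right_mono mult_left_mono assms) simp_all
  also have "\<dots> = M * (cmod a * cmod b)" by (simp only: mult_ac)
  also have "\<dots> \<le> M * (((cmod a)\<^sup>2 + (cmod b)\<^sup>2) / 2)"
    using sum_squares_bound[of "cmod a" "cmod b"] by (intro mult_left_mono M) simp
  finally show ?thesis by (simp add: algebra_simps)
qed

text \<open>Schur test: every row and every column of \<open>K\<close> has at most \<open>card S\<close> nonzero entries.\<close>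

lemma kband_kbounded:
  assumes "kband K S" "\<And>x g h. cmod (K x g h) \<le> M"
  shows "kbounded K"
  unfolding kbounded_def bdd_above_def
proof (intro exI[of _ "M * card S"] ballI)
  fix r assume "r \<in> kvals K"
  then obtain x \<eta> \<xi> where r: "r = cmod (kform K x \<eta> \<xi>)" and "fin_unit \<eta>" "fin_unit \<xi>"
    by (auto simp: kvals_def)
  define E where "E = {g. \<eta> g \<noteq> 0}"
  define D where "D = {h. \<xi> h \<noteq> 0}"
  define a where "a = (\<lambda>g. M / 2 * (cmod (\<eta> g))\<^sup>2)"
  define b where "b = (\<lambda>h. M / 2 * (cmod (\<xi> h))\<^sup>2)"
  have M: "0 \<le> M" using assms(2) norm_ge_zero order_trans by metis
  have unit: "finite E" "finite D" "(\<Sum>g\<in>E. (cmod (\<eta> g))\<^sup>2) \<le> 1" "(\<Sum>h\<in>D. (cmod (\<xi> h))\<^sup>2) \<le> 1"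
    using \<open>fin_unit \<eta>\<close> \<open>fin_unit \<xi>\<close> by (auto simp: fin_unit_def E_def D_def)
  have E: "finite E" "sum a E \<le> M / 2" and D: "finite D" "sum b D \<le> M / 2"
    unfolding a_def b_def sum_distrib_left[symmetric]
    using unit M mult_left_le[OF unit(3), of "M / 2"] mult_left_le[OF unit(4), of "M / 2"] by simp_all
  have S: "finite S" "\<And>x g h. K x g h \<noteq> 0 \<Longrightarrow> g - h \<in> S" using assms(1) by (auto simp: kband_def)
  have entry: "cmod (cnj (\<eta> g) * K x g h * \<xi> h)
      \<le> (if g - h \<in> S then a g else 0) + (if g - h \<in> S then b h else 0)" for g h
    using norm_cnj_mult_mult_le[OF assms(2)] S(2)[of x g h] by (auto simp: a_def b_def)
  have "r \<le> (\<Sum>g\<in>E. \<Sum>h\<in>D. cmod (cnj (\<eta> g) * K x g h * \<xi> h))"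
    unfolding r kform_def E_def[symmetric] D_def[symmetric]
    by (rule order_trans[OF norm_sum sum_mono[OF norm_sum]])
  also have "\<dots> \<le> (\<Sum>g\<in>E. \<Sum>h\<in>D. (if g - h \<in> S then a g else 0) + (if g - h \<in> S then b h else 0))"
    by (intro sum_mono entry)
  also have "\<dots> = (\<Sum>g\<in>E. \<Sum>h\<in>D. if g - h \<in> S then a g else 0)
                + (\<Sum>h\<in>D. \<Sum>g\<in>E. if g - h \<in> S then b h else 0)"
    by (simp only: sum.distrib sum.swap[of _ E D])
  also have "\<dots> \<le> card S * sum a E + card S * sum b D"
    using E(1) D(1) M card_diff_left_le[OF S(1)] card_diff_right_le[OF S(1)]
    by (intro add_mono sum_sum_if_le_card) (simp_all add: a_def b_def)
  also have "\<dots> \<le> card S * (M / 2) + card S * (M / 2)"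
    using E(2) D(2) by (intro add_mono mult_left_mono) simp_all
  finally show "r \<le> M * card S" by simp
qed

section \<open>The algebraic crossed product\<close>

lemma cont_action_add: "cont_action \<alpha> \<Longrightarrow> \<alpha> (g + h) y = \<alpha> g (\<alpha> h y)"
  by (simp add: cont_action_def)

lemma cont_action_diff: "cont_action \<alpha> \<Longrightarrow> \<alpha> (g - h) (\<alpha> h y) = \<alpha> g y"
  using cont_action_add[of \<alpha> "g - h" h y] by simp

lemma continuous_on_cont_action_comp:
  "cont_action \<alpha> \<Longrightarrow> continuous_on UNIV f \<Longrightarrow> continuous_on UNIV (\<lambda>y. f (\<alpha> g y))"
  by (rule continuous_on_compose2[of UNIV f]) (auto simp: cont_action_def)

definition coeff_support :: "('g \<Rightarrow> 'x \<Rightarrow> complex) \<Rightarrow> 'g set" where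
  "coeff_support F = {s. F s \<noteq> (\<lambda>_. 0)}"

definition cp_coeffs :: "('g \<Rightarrow> 'x::topological_space \<Rightarrow> complex) \<Rightarrow> bool" where
  "cp_coeffs F \<longleftrightarrow> finite (coeff_support F) \<and> (\<forall>s. continuous_on UNIV (F s))"

definition cp_kernel ::
    "('g::group_add \<Rightarrow> 'x \<Rightarrow> 'x) \<Rightarrow> ('g \<Rightarrow> 'x \<Rightarrow> complex) \<Rightarrow> ('g, 'x) kernel" where
  "cp_kernel \<alpha> F = (\<lambda>x g h. F (g - h) (\<alpha> g x))"

text \<open>The rules \<open>(\<pi>(a) \<lambda>\<^sub>s) (\<pi>(b) \<lambda>\<^sub>t) = \<pi>(a \<cdot> (b \<circ> \<alpha>(-s))) \<lambda>\<^sub>s\<^sub>+\<^sub>t\<close>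
  and \<open>(\<pi>(a) \<lambda>\<^sub>s)\<^sup>* = \<pi>(cnj a \<circ> \<alpha>(s)) \<lambda>\<^sub>-\<^sub>s\<close> on coefficients.\<close>

definition twisted_conv :: "('g::group_add \<Rightarrow> 'x \<Rightarrow> 'x) \<Rightarrow> ('g \<Rightarrow> 'x \<Rightarrow> complex)
    \<Rightarrow> ('g \<Rightarrow> 'x \<Rightarrow> complex) \<Rightarrow> 'g \<Rightarrow> 'x \<Rightarrow> complex" where
  "twisted_conv \<alpha> F G = (\<lambda>s y. \<Sum>t\<in>coeff_support F. F t y * G (- t + s) (\<alpha> (- t) y))"

definition twisted_adj ::
    "('g::group_add \<Rightarrow> 'x \<Rightarrow> 'x) \<Rightarrow> ('g \<Rightarrow> 'x \<Rightarrow> complex) \<Rightarrow> 'g \<Rightarrow> 'x \<Rightarrow> complex" where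
  "twisted_adj \<alpha> F = (\<lambda>s y. cnj (F (- s) (\<alpha> (- s) y)))"

lemma cp_alg_iff: "K \<in> cp_alg \<alpha> \<longleftrightarrow> (\<exists>F. K = cp_kernel \<alpha> F \<and> cp_coeffs F)"
  by (auto simp: cp_alg_def cp_kernel_def cp_coeffs_def coeff_support_def)

lemma kband_cp_kernel: "cp_coeffs F \<Longrightarrow> kband (cp_kernel \<alpha> F) (coeff_support F)"
  by (auto simp: kband_def cp_coeffs_def cp_kernel_def coeff_support_def)

lemma cp_alg_kband: "K \<in> cp_alg \<alpha> \<Longrightarrow> \<exists>S. kband K S"
  using kband_cp_kernel cp_alg_iff by metis

lemma cp_kernel_kmult:
  assumes "cont_action \<alpha>" "cp_coeffs F"
  shows "kmult (cp_kernel \<alpha> F) (cp_kernel \<alpha> G) = cp_kernel \<alpha> (twisted_conv \<alpha> F G)"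
proof (intro ext)
  fix x g h
  note band = kband_cp_kernel[OF assms(2), of \<alpha>]
  have "kmult (cp_kernel \<alpha> F) (cp_kernel \<alpha> G) x g h
      = (\<Sum>k\<in>{k. g - k \<in> coeff_support F}. cp_kernel \<alpha> F x g k * cp_kernel \<alpha> G x k h)"
    using band kband_finite_left[OF band] by (rule kmult_kband_left) simp
  also have "\<dots> = (\<Sum>t\<in>coeff_support F. cp_kernel \<alpha> F x g (- t + g) * cp_kernel \<alpha> G x (- t + g) h)"
    unfolding vimage_diff_left by (subst sum.reindex) (simp_all add: inj_on_def)
  also have "\<dots> = twisted_conv \<alpha> F G (g - h) (\<alpha> g x)"
  proof -
    have "(- t + g) - h = - t + (g - h)" for t by (metis add.assoc diff_conv_add_uminus)
    then show ?thesis
      by (simp add: twisted_conv_def cp_kernel_def diff_uminus_add_cancel cont_action_add[OF assms(1)])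
  qed
  finally show "kmult (cp_kernel \<alpha> F) (cp_kernel \<alpha> G) x g h = cp_kernel \<alpha> (twisted_conv \<alpha> F G) x g h"
    by (simp add: cp_kernel_def)
qed

lemma cp_coeffs_twisted_conv:
  assumes "cont_action \<alpha>" "cp_coeffs F" "cp_coeffs G"
  shows "cp_coeffs (twisted_conv \<alpha> F G)"
proof -
  have "coeff_support (twisted_conv \<alpha> F G) \<subseteq> (\<lambda>(t, u). t + u) ` (coeff_support F \<times> coeff_support G)"
  proof
    fix s assume "s \<in> coeff_support (twisted_conv \<alpha> F G)"
    then obtain y where "twisted_conv \<alpha> F G s y \<noteq> 0" by (auto simp: coeff_support_def)
    then have "\<exists>t\<in>coeff_support F. F t y * G (- t + s) (\<alpha> (- t) y) \<noteq> 0"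
      using sum.neutral[of "coeff_support F" "\<lambda>t. F t y * G (- t + s) (\<alpha> (- t) y)"]
      unfolding twisted_conv_def by blast
    then obtain t where t: "t \<in> coeff_support F" "G (- t + s) (\<alpha> (- t) y) \<noteq> 0" by auto
    then have "- t + s \<in> coeff_support G" by (auto simp: coeff_support_def)
    with t(1) show "s \<in> (\<lambda>(t, u). t + u) ` (coeff_support F \<times> coeff_support G)"
      by (intro image_eqI[of _ _ "(t, - t + s)"]) simp_all
  qed
  then have "finite (coeff_support (twisted_conv \<alpha> F G))"
    by (rule finite_subset) (use assms(2,3) in \<open>simp add: cp_coeffs_def\<close>)
  moreover have "continuous_on UNIV (twisted_conv \<alpha> F G s)" for s
    unfolding twisted_conv_def using assms(2,3)
    by (intro continuous_on_sum continuous_on_mult continuous_on_cont_action_comp[OF assms(1)])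
      (simp_all add: cp_coeffs_def)
  ultimately show ?thesis by (simp add: cp_coeffs_def)
qed

lemma cp_alg_kmult:
  "cont_action \<alpha> \<Longrightarrow> K \<in> cp_alg \<alpha> \<Longrightarrow> L \<in> cp_alg \<alpha> \<Longrightarrow> kmult K L \<in> cp_alg \<alpha>"
  using cp_kernel_kmult cp_coeffs_twisted_conv unfolding cp_alg_iff by metis

lemma cp_kernel_kadj:
  assumes "cont_action \<alpha>"
  shows "kadj (cp_kernel \<alpha> F) = cp_kernel \<alpha> (twisted_adj \<alpha> F)"
proof (intro ext)
  fix x g h
  have "\<alpha> (- (g - h)) (\<alpha> g x) = \<alpha> h x"
    unfolding minus_diff_eq by (rule cont_action_diff[OF assms])
  then show "kadj (cp_kernel \<alpha> F) x g h = cp_kernel \<alpha> (twisted_adj \<alpha> F) x g h"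
    by (simp add: kadj_def cp_kernel_def twisted_adj_def)
qed

lemma cp_coeffs_twisted_adj:
  assumes "cont_action \<alpha>" "cp_coeffs F"
  shows "cp_coeffs (twisted_adj \<alpha> F)"
proof -
  have "coeff_support (twisted_adj \<alpha> F) \<subseteq> uminus ` coeff_support F"
  proof
    fix s assume "s \<in> coeff_support (twisted_adj \<alpha> F)"
    then have "- s \<in> coeff_support F" by (auto simp: coeff_support_def twisted_adj_def)
    then show "s \<in> uminus ` coeff_support F" by (rule rev_image_eqI) simp
  qed
  then have "finite (coeff_support (twisted_adj \<alpha> F))"
    by (rule finite_subset) (use assms(2) in \<open>simp add: cp_coeffs_def image_iff\<close>)
  moreover have "continuous_on UNIV (twisted_adj \<alpha> F s)" for s
    unfolding twisted_adj_def using assms(2)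
    by (intro continuous_on_cnj continuous_on_cont_action_comp[OF assms(1)]) (simp add: cp_coeffs_def)
  ultimately show ?thesis by (simp add: cp_coeffs_def)
qed

lemma cp_alg_kadj: "cont_action \<alpha> \<Longrightarrow> K \<in> cp_alg \<alpha> \<Longrightarrow> kadj K \<in> cp_alg \<alpha>"
  using cp_kernel_kadj cp_coeffs_twisted_adj unfolding cp_alg_iff by metis

lemma cp_alg_ksub: "K \<in> cp_alg \<alpha> \<Longrightarrow> L \<in> cp_alg \<alpha> \<Longrightarrow> ksub K L \<in> cp_alg \<alpha>"
proof -
  assume "K \<in> cp_alg \<alpha>" "L \<in> cp_alg \<alpha>"
  then obtain F G where K: "K = cp_kernel \<alpha> F" "cp_coeffs F" and L: "L = cp_kernel \<alpha> G" "cp_coeffs G"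
    unfolding cp_alg_iff by blast
  have "ksub K L = cp_kernel \<alpha> (\<lambda>s y. F s y - G s y)"
    by (simp add: K L ksub_def cp_kernel_def)
  moreover have "coeff_support (\<lambda>s y. F s y - G s y) \<subseteq> coeff_support F \<union> coeff_support G"
    by (auto simp: coeff_support_def)
  then have "finite (coeff_support (\<lambda>s y. F s y - G s y))"
    by (rule finite_subset) (use K(2) L(2) in \<open>simp add: cp_coeffs_def\<close>)
  then have "cp_coeffs (\<lambda>s y. F s y - G s y)"
    using K(2) L(2) by (simp add: cp_coeffs_def continuous_on_diff)
  ultimately show ?thesis unfolding cp_alg_iff by blast
qed

lemma cp_alg_kfun:
  fixes \<alpha> :: "'g::group_add \<Rightarrow> 'x::topological_space \<Rightarrow> 'x"
  assumes "continuous_on UNIV f"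
  shows "kfun \<alpha> f \<in> cp_alg \<alpha>"
proof -
  define F :: "'g \<Rightarrow> 'x \<Rightarrow> complex" where "F = (\<lambda>s. if s = 0 then f else (\<lambda>_. 0))"
  have "kfun \<alpha> f = cp_kernel \<alpha> F" by (auto simp: kfun_def cp_kernel_def F_def fun_eq_iff)
  moreover have "coeff_support F \<subseteq> {0}" by (auto simp: coeff_support_def F_def)
  then have "finite (coeff_support F)" by (rule finite_subset) simp
  then have "cp_coeffs F" using assms by (simp add: cp_coeffs_def F_def)
  ultimately show ?thesis unfolding cp_alg_iff by blast
qed

lemma cp_alg_kbounded:
  assumes "compact (UNIV :: 'x::topological_space set)" "K \<in> cp_alg (\<alpha> :: 'g::group_add \<Rightarrow> 'x \<Rightarrow> 'x)"
  shows "kbounded K"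
proof -
  obtain F where K: "K = cp_kernel \<alpha> F" "cp_coeffs F" using assms(2) cp_alg_iff by metis
  have "\<exists>B. \<forall>y. cmod (F s y) \<le> B" for s
  proof -
    have "bounded (range (F s))" using K(2) assms(1)
      by (intro compact_imp_bounded compact_continuous_image) (simp_all add: cp_coeffs_def)
    then show ?thesis by (meson bounded_iff rangeI)
  qed
  then obtain B where B: "\<And>s y. cmod (F s y) \<le> B s" by metis
  have "cmod (K x g h) \<le> (\<Sum>s\<in>coeff_support F. \<bar>B s\<bar>)" for x g h
  proof (cases "g - h \<in> coeff_support F")
    case True
    have "cmod (K x g h) \<le> \<bar>B (g - h)\<bar>" using B[of "g - h" "\<alpha> g x"] by (simp add: K cp_kernel_def)
    also have "\<dots> \<le> (\<Sum>s\<in>coeff_support F. \<bar>B s\<bar>)"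
      using True K(2) by (intro member_le_sum) (auto simp: cp_coeffs_def)
    finally show ?thesis .
  next
    case False
    then have "K x g h = 0" by (simp add: K cp_kernel_def coeff_support_def)
    then show ?thesis by (simp add: sum_nonneg)
  qed
  with kband_cp_kernel[OF K(2)] show ?thesis unfolding K(1) by (rule kband_kbounded)
qed

lemma knorm_zero: "knorm ((\<lambda>x g h. 0) :: ('g, 'x) kernel) = 0"
proof -
  have "kvals ((\<lambda>x g h. 0) :: ('g, 'x) kernel) = {0}"
    unfolding kvals_def kform_def by (auto intro!: exI[of _ "\<lambda>_. 0"] simp: fin_unit_def)
  then show ?thesis by (simp add: knorm_def)
qed

lemma cp_alg_subset_crossed_prod:
  assumes "compact (UNIV :: 'x::topological_space set)"
  shows "cp_alg (\<alpha> :: 'g::group_add \<Rightarrow> 'x \<Rightarrow> 'x) \<subseteq> crossed_prod \<alpha>"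
proof
  fix K assume K: "K \<in> cp_alg \<alpha>"
  have "knorm (ksub K K) = 0" using knorm_zero by (simp add: ksub_def)
  then have "\<forall>\<epsilon>>0. \<exists>L\<in>cp_alg \<alpha>. knorm (ksub K L) < \<epsilon>"
    by (intro allI impI bexI[of _ K]) (use K in simp_all)
  with cp_alg_kbounded[OF assms K] show "K \<in> crossed_prod \<alpha>" by (simp add: crossed_prod_def)
qed

section \<open>Partitions of unity\<close>

lemma Urysohn_point:
  fixes V :: "'x::t2_space set"
  assumes "compact (UNIV :: 'x set)" "open V" "y \<in> V"
  obtains f :: "'x \<Rightarrow> real"
  where "continuous_on UNIV f" "\<And>z. 0 \<le> f z" "f y = 1" "\<And>z. z \<notin> V \<Longrightarrow> f z = 0"
proof -
  have "normal_space (euclidean :: 'x topology)"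
  proof (rule compact_Hausdorff_or_regular_imp_normal_space)
    show "compact_space (euclidean :: 'x topology)" using assms(1) by (simp add: compact_space_def)
    show "Hausdorff_space (euclidean :: 'x topology) \<or> regular_space euclidean"
      unfolding Hausdorff_space_def disjnt_def using hausdorff by auto
  qed
  moreover have "closedin euclidean (- V)" "closedin euclidean {y}" "disjnt (- V) {y}"
    using assms(2,3) by (simp_all add: closed_Compl disjnt_def)
  ultimately obtain f where f: "continuous_map euclidean (top_of_set {0..1::real}) f"
      "f ` (- V) \<subseteq> {0}" "f ` {y} \<subseteq> {1}"
    using Urysohn_lemma[of euclidean "- V" "{y}" 0 1] by auto
  then have "continuous_on UNIV f" "\<And>z. 0 \<le> f z"
    unfolding continuous_map_in_subtopology continuous_map_iff_continuous[of UNIV, simplified]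
    by auto
  moreover have "f y = 1" "\<And>z. z \<notin> V \<Longrightarrow> f z = 0" using f(2,3) by auto
  ultimately show ?thesis by (rule that)
qed

lemma bump_cover:
  fixes V :: "'i \<Rightarrow> 'x::t2_space set"
  assumes "compact (UNIV :: 'x set)" "finite S" "\<And>t. t \<in> S \<Longrightarrow> open (V t)" "\<And>y. \<exists>t\<in>S. y \<in> V t"
  obtains \<psi> :: "'i \<Rightarrow> 'x \<Rightarrow> real"
  where "\<And>t. continuous_on UNIV (\<psi> t)" "\<And>t y. 0 \<le> \<psi> t y" "\<And>t y. \<psi> t y \<noteq> 0 \<Longrightarrow> y \<in> V t"
    "\<And>y. 0 < (\<Sum>t\<in>S. \<psi> t y)"
proof -
  obtain \<tau> where \<tau>: "\<And>y. \<tau> y \<in> S" "\<And>y. y \<in> V (\<tau> y)" using assms(4) by metis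
  have "\<exists>f :: 'x \<Rightarrow> real. continuous_on UNIV f \<and> (\<forall>z. 0 \<le> f z) \<and> f y = 1
      \<and> (\<forall>z. z \<notin> V (\<tau> y) \<longrightarrow> f z = 0)"
    for y using Urysohn_point[OF assms(1) assms(3)[OF \<tau>(1)] \<tau>(2), of y] by metis
  then obtain f :: "'x \<Rightarrow> 'x \<Rightarrow> real" where "\<forall>y. continuous_on UNIV (f y) \<and> (\<forall>z. 0 \<le> f y z)
      \<and> f y y = 1 \<and> (\<forall>z. z \<notin> V (\<tau> y) \<longrightarrow> f y z = 0)"
    by metis
  then have f: "\<And>y. continuous_on UNIV (f y)" "\<And>y z. 0 \<le> f y z"
    "\<And>y. f y y = 1" "\<And>y z. z \<notin> V (\<tau> y) \<Longrightarrow> f y z = 0"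
    by auto
  have "open (f y -` {1/2<..})" if "y \<in> UNIV" for y by (rule open_vimage) (simp_all add: f(1))
  moreover have "UNIV \<subseteq> (\<Union>y\<in>UNIV. f y -` {1/2<..})"
  proof
    fix z show "z \<in> (\<Union>y\<in>UNIV. f y -` {1/2<..})" using f(3)[of z] by (intro UN_I[of z]) simp_all
  qed
  ultimately obtain Y where Y: "finite Y" "UNIV \<subseteq> (\<Union>y\<in>Y. f y -` {1/2<..})"
    by (rule compactE_image[OF assms(1)])
  define \<psi> where "\<psi> = (\<lambda>t z. \<Sum>y\<in>{y\<in>Y. \<tau> y = t}. f y z)"
  show ?thesis
  proof
    show "continuous_on UNIV (\<psi> t)" for t unfolding \<psi>_def by (intro continuous_on_sum f(1))
    show "0 \<le> \<psi> t z" for t z unfolding \<psi>_def by (intro sum_nonneg f(2))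
    show "z \<in> V t" if nz: "\<psi> t z \<noteq> 0" for t z
    proof -
      obtain y where "y \<in> Y" "\<tau> y = t" "f y z \<noteq> 0"
        using nz sum.neutral[of "{y\<in>Y. \<tau> y = t}" "\<lambda>y. f y z"] unfolding \<psi>_def by blast
      with f(4) show ?thesis by blast
    qed
    show "0 < (\<Sum>t\<in>S. \<psi> t z)" for z
    proof -
      obtain y where y: "y \<in> Y" "1/2 < f y z" using Y(2) by blast
      have "f y z \<le> \<psi> (\<tau> y) z" unfolding \<psi>_def using y(1) Y(1) f(2) by (intro member_le_sum) auto
      also have "\<dots> \<le> (\<Sum>t\<in>S. \<psi> t z)"
        using assms(2) \<tau>(1) f(2) by (intro member_le_sum) (auto simp: \<psi>_def sum_nonneg)
      finally show ?thesis using y(2) by linarith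
    qed
  qed
qed

lemma square_partition_of_unity:
  fixes V :: "'i \<Rightarrow> 'x::t2_space set"
  assumes "compact (UNIV :: 'x set)" "finite S" "\<And>t. t \<in> S \<Longrightarrow> open (V t)" "\<And>y. \<exists>t\<in>S. y \<in> V t"
  obtains H :: "'i \<Rightarrow> 'x \<Rightarrow> real"
  where "\<And>t. continuous_on UNIV (H t)" "\<And>t y. H t y \<noteq> 0 \<Longrightarrow> y \<in> V t"
    "\<And>y. (\<Sum>t\<in>S. (H t y)\<^sup>2) = 1"
proof -
  obtain \<psi> :: "'i \<Rightarrow> 'x \<Rightarrow> real" where \<psi>: "\<And>t. continuous_on UNIV (\<psi> t)" "\<And>t y. 0 \<le> \<psi> t y"
    "\<And>t y. \<psi> t y \<noteq> 0 \<Longrightarrow> y \<in> V t" "\<And>y. 0 < (\<Sum>t\<in>S. \<psi> t y)"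
    using bump_cover[OF assms] by metis
  define \<Sigma> where "\<Sigma> = (\<lambda>y. \<Sum>t\<in>S. \<psi> t y)"
  show ?thesis
  proof
    show "continuous_on UNIV (\<lambda>y. sqrt (\<psi> t y / \<Sigma> y))" for t
      using \<psi>(4) unfolding \<Sigma>_def
      by (intro continuous_on_real_sqrt continuous_on_divide continuous_on_sum \<psi>(1)) (metis less_irrefl)
    show "y \<in> V t" if "sqrt (\<psi> t y / \<Sigma> y) \<noteq> 0" for t y using that \<psi>(3) by auto
    show "(\<Sum>t\<in>S. (sqrt (\<psi> t y / \<Sigma> y))\<^sup>2) = 1" for y
      using \<psi>(2) \<psi>(4)[of y] by (simp add: \<Sigma>_def less_imp_le sum_divide_distrib[symmetric])
  qed
qed

section \<open>From comparison to an isometry\<close>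

lemma subeq_closed_of_no_invariant_measure:
  assumes "dyn_comparison \<alpha>" "\<not> (\<exists>M. regular_borel_prob M \<and> invariant_measure \<alpha> M)"
    and "open W" "W \<noteq> {}" "closed F"
  shows "subeq_closed \<alpha> F W"
proof -
  have "subeq_open \<alpha> UNIV W" using assms(1-4) unfolding dyn_comparison_def by blast
  with assms(5) show ?thesis unfolding subeq_open_def by blast
qed

definition translating_partition ::
    "('g \<Rightarrow> 'x \<Rightarrow> 'x) \<Rightarrow> 'x set \<Rightarrow> 'g set \<Rightarrow> ('g \<Rightarrow> 'x::topological_space \<Rightarrow> real) \<Rightarrow> bool" where
  "translating_partition \<alpha> W S H \<longleftrightarrow> finite S \<and> (\<forall>t. continuous_on UNIV (H t))
     \<and> (\<forall>t y. H t y \<noteq> 0 \<longrightarrow> t \<in> S \<and> \<alpha> t y \<in> W)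
     \<and> (\<forall>t y t' y'. H t y \<noteq> 0 \<and> H t' y' \<noteq> 0 \<and> \<alpha> t y = \<alpha> t' y' \<longrightarrow> t = t')
     \<and> (\<forall>y. (\<Sum>t\<in>S. (H t y)\<^sup>2) = 1)"

lemma translating_partition_of_subeq_closed:
  fixes \<alpha> :: "'g::group_add \<Rightarrow> 'x::t2_space \<Rightarrow> 'x"
  assumes "compact (UNIV :: 'x set)" "subeq_closed \<alpha> UNIV W"
  obtains S H where "translating_partition \<alpha> W S H"
proof -
  obtain UU s where UU: "finite UU" "\<And>U. U \<in> UU \<Longrightarrow> open U" "UNIV \<subseteq> \<Union>UU"
    "\<And>U. U \<in> UU \<Longrightarrow> \<alpha> (s U) ` U \<subseteq> W"
    "\<And>U U'. U \<in> UU \<Longrightarrow> U' \<in> UU \<Longrightarrow> U \<noteq> U' \<Longrightarrow> \<alpha> (s U) ` U \<inter> \<alpha> (s U') ` U' = {}"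
    using assms(2) unfolding subeq_closed_def by metis
  define V where "V = (\<lambda>t. \<Union>{U\<in>UU. s U = t})"
  have "finite (s ` UU)" using UU(1) by simp
  moreover have "open (V t)" for t unfolding V_def using UU(2) by (intro open_Union) blast
  moreover have "\<exists>t\<in>s ` UU. y \<in> V t" for y using UU(3) unfolding V_def by blast
  ultimately obtain H :: "'g \<Rightarrow> 'x \<Rightarrow> real" where H: "\<And>t. continuous_on UNIV (H t)"
    "\<And>t y. H t y \<noteq> 0 \<Longrightarrow> y \<in> V t" "\<And>y. (\<Sum>t\<in>s ` UU. (H t y)\<^sup>2) = 1"
    using square_partition_of_unity[OF assms(1), of "s ` UU" V] by metis
  have piece: "\<exists>U\<in>UU. s U = t \<and> y \<in> U" if "H t y \<noteq> 0" for t y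
    using H(2)[OF that] unfolding V_def by blast
  have "translating_partition \<alpha> W (s ` UU) H"
    unfolding translating_partition_def
  proof (intro conjI allI impI)
    show "finite (s ` UU)" "continuous_on UNIV (H t)" "(\<Sum>t\<in>s ` UU. (H t y)\<^sup>2) = 1" for t y
      using UU(1) H(1,3) by simp_all
    show "t \<in> s ` UU" "\<alpha> t y \<in> W" if "H t y \<noteq> 0" for t y
      using piece[OF that] UU(4) by blast+
    show "t = t'" if meet: "H t y \<noteq> 0 \<and> H t' y' \<noteq> 0 \<and> \<alpha> t y = \<alpha> t' y'" for t y t' y'
    proof -
      obtain U where U: "U \<in> UU" "s U = t" "y \<in> U" using meet piece by blast
      obtain U' where U': "U' \<in> UU" "s U' = t'" "y' \<in> U'" using meet piece by blast
      have "\<alpha> (s U) y \<in> \<alpha> (s U) ` U \<inter> \<alpha> (s U') ` U'"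
        using U U' meet by (metis IntI image_eqI)
      with U(1) U'(1) UU(5) have "U = U'" by blast
      with U U' show ?thesis by simp
    qed
  qed
  then show ?thesis by (rule that)
qed

definition partition_isometry ::
    "('g::group_add \<Rightarrow> 'x \<Rightarrow> 'x) \<Rightarrow> ('g \<Rightarrow> 'x \<Rightarrow> real) \<Rightarrow> ('g, 'x) kernel" where
  "partition_isometry \<alpha> H = cp_kernel \<alpha> (\<lambda>t y. complex_of_real (H t (\<alpha> (- t) y)))"

lemma partition_isometry_apply:
  assumes "cont_action \<alpha>"
  shows "partition_isometry \<alpha> H x g k = complex_of_real (H (g - k) (\<alpha> k x))"
proof -
  have "\<alpha> (- (g - k)) (\<alpha> g x) = \<alpha> k x"
    unfolding minus_diff_eq by (rule cont_action_diff[OF assms])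
  then show ?thesis by (simp add: partition_isometry_def cp_kernel_def)
qed

lemma partition_isometry_cp_alg:
  assumes "cont_action \<alpha>" "translating_partition \<alpha> W S H"
  shows "partition_isometry \<alpha> H \<in> cp_alg \<alpha>"
proof -
  define F where "F = (\<lambda>t y. complex_of_real (H t (\<alpha> (- t) y)))"
  have "coeff_support F \<subseteq> S"
  proof
    fix t assume "t \<in> coeff_support F"
    then obtain y where "H t (\<alpha> (- t) y) \<noteq> 0" by (auto simp: coeff_support_def F_def fun_eq_iff)
    with assms(2) show "t \<in> S" by (simp add: translating_partition_def)
  qed
  then have "finite (coeff_support F)"
    by (rule finite_subset) (use assms(2) in \<open>simp add: translating_partition_def\<close>)
  moreover have "continuous_on UNIV (F t)" for t
    unfolding F_def continuous_on_of_real_o_iff using assms(2)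
    by (intro continuous_on_cont_action_comp[OF assms(1)]) (simp add: translating_partition_def)
  ultimately show ?thesis
    unfolding cp_alg_iff partition_isometry_def F_def[symmetric] cp_coeffs_def by blast
qed

lemma partition_isometry_isometric:
  assumes "cont_action \<alpha>" "translating_partition \<alpha> W S H"
  shows "kmult (kadj (partition_isometry \<alpha> H)) (partition_isometry \<alpha> H) = kid"
proof (intro ext)
  fix x g h
  let ?v = "partition_isometry \<alpha> H"
  have P: "finite S" "\<And>t y. H t y \<noteq> 0 \<Longrightarrow> t \<in> S"
    "\<And>t y t' y'. H t y \<noteq> 0 \<Longrightarrow> H t' y' \<noteq> 0 \<Longrightarrow> \<alpha> t y = \<alpha> t' y' \<Longrightarrow> t = t'"
    "\<And>y. (\<Sum>t\<in>S. (H t y)\<^sup>2) = 1"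
    using assms(2) unfolding translating_partition_def by blast+
  note v = partition_isometry_apply[OF assms(1)]
  define A where "A = {k. k - h \<in> S}"
  have "finite A" unfolding A_def vimage_diff_right using P(1) by simp
  then have "kmult (kadj ?v) ?v x g h = (\<Sum>k\<in>A. kadj ?v x g k * ?v x k h)"
    by (rule kmult_eq_sum) (use P(2) in \<open>auto simp: A_def v\<close>)
  also have "\<dots> = (\<Sum>k\<in>A. complex_of_real (H (k - g) (\<alpha> g x) * H (k - h) (\<alpha> h x)))"
    by (simp add: kadj_def v)
  also have "\<dots> = kid x g h"
  proof (cases "g = h")
    case True
    have "(\<Sum>k\<in>A. complex_of_real (H (k - h) (\<alpha> h x) * H (k - h) (\<alpha> h x)))
        = complex_of_real (\<Sum>t\<in>S. (H t (\<alpha> h x))\<^sup>2)"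
      unfolding A_def vimage_diff_right of_real_sum
      by (subst sum.reindex) (simp_all add: inj_on_def power2_eq_square)
    with True P(4) show ?thesis by (simp add: kid_def)
  next
    case False
    have "complex_of_real (H (k - g) (\<alpha> g x) * H (k - h) (\<alpha> h x)) = 0" for k
    proof (rule ccontr)
      assume "complex_of_real (H (k - g) (\<alpha> g x) * H (k - h) (\<alpha> h x)) \<noteq> 0"
      moreover have "\<alpha> (k - g) (\<alpha> g x) = \<alpha> (k - h) (\<alpha> h x)"
        by (simp add: cont_action_diff[OF assms(1)])
      ultimately have "k - g = k - h" using P(3) by auto
      with False show False by (metis diff_diff_eq2 eq_iff_diff_eq_0 minus_diff_eq)
    qed
    with False show ?thesis by (simp only: sum.neutral_const kid_def if_False)
  qed
  finally show "kmult (kadj ?v) ?v x g h = kid x g h" .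
qed

lemma partition_isometry_range:
  assumes "cont_action \<alpha>" "translating_partition \<alpha> W S H"
    and "kmult (partition_isometry \<alpha> H) (kadj (partition_isometry \<alpha> H)) x g h \<noteq> 0"
  shows "\<alpha> g x \<in> W" "\<alpha> h x \<in> W"
proof -
  let ?v = "partition_isometry \<alpha> H"
  have W: "\<alpha> g x \<in> W" if "?v x g k \<noteq> 0" for g k
  proof -
    from that have "H (g - k) (\<alpha> k x) \<noteq> 0" by (simp add: partition_isometry_apply[OF assms(1)])
    with assms(2) have "\<alpha> (g - k) (\<alpha> k x) \<in> W" by (simp add: translating_partition_def)
    then show ?thesis by (simp add: cont_action_diff[OF assms(1)])
  qed
  obtain B where "kband ?v B"
    using cp_alg_kband[OF partition_isometry_cp_alg[OF assms(1,2)]] by blast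
  then obtain k where "?v x g k \<noteq> 0" "?v x h k \<noteq> 0"
    using assms(3) by (rule kmult_nonzero) (simp add: kadj_def)
  with W show "\<alpha> g x \<in> W" "\<alpha> h x \<in> W" by blast+
qed

section \<open>The hereditary subalgebra generated by \<open>\<pi>(\<phi>)\<close>\<close>

lemma isometry_range_projection:
  assumes "kband v S" "kmult (kadj v) v = kid"
  shows "kadj (kmult v (kadj v)) = kmult v (kadj v)"
    and "kmult (kmult v (kadj v)) (kmult v (kadj v)) = kmult v (kadj v)"
proof -
  have adj: "kband (kadj v) (uminus ` S)" by (rule kband_kadj[OF assms(1)])
  then show "kadj (kmult v (kadj v)) = kmult v (kadj v)"
    using kadj_kmult[OF assms(1)] by simp
  have "kband (kmult v (kadj v)) ((\<lambda>(s, t). s + t) ` (S \<times> uminus ` S))"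
    by (rule kband_kmult[OF assms(1) adj])
  then have "kmult (kmult v (kadj v)) (kmult v (kadj v)) = kmult v (kmult (kadj v) (kmult v (kadj v)))"
    by (rule kmult_assoc[OF assms(1)])
  also have "kmult (kadj v) (kmult v (kadj v)) = kmult (kmult (kadj v) v) (kadj v)"
    by (rule kmult_assoc[OF adj adj, symmetric])
  finally show "kmult (kmult v (kadj v)) (kmult v (kadj v)) = kmult v (kadj v)"
    by (simp add: assms(2) kmult_kid_left)
qed

lemma kpos_kfun:
  fixes \<alpha> :: "'g::group_add \<Rightarrow> 'x::topological_space \<Rightarrow> 'x"
  assumes "compact (UNIV :: 'x set)" "continuous_on UNIV r" "\<And>y. 0 \<le> r y"
  shows "kpos (crossed_prod \<alpha>) (kfun \<alpha> (\<lambda>y. complex_of_real (r y)))"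
proof -
  define c where "c = kfun \<alpha> (\<lambda>y. complex_of_real (sqrt (r y)))"
  have "c \<in> crossed_prod \<alpha>"
    unfolding c_def using assms(2)
    by (intro subsetD[OF cp_alg_subset_crossed_prod[OF assms(1)]] cp_alg_kfun)
      (simp add: continuous_on_real_sqrt)
  moreover have "kmult (kadj c) c = kfun \<alpha> (\<lambda>y. complex_of_real (r y))"
    unfolding c_def kadj_kfun kmult_kfun_kfun using assms(3)
    by (simp flip: of_real_mult)
  ultimately show ?thesis unfolding kpos_def by metis
qed

text \<open>For a projection \<open>p\<close> with \<open>\<pi>(w) p = p \<pi>(w) = p\<close>, \<open>\<pi>(w\<^sup>2) - p\<close> is the square of
  the selfadjoint \<open>\<pi>(w) - p\<close>.\<close>

lemma kpos_ksub_projection: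
  fixes \<alpha> :: "'g::group_add \<Rightarrow> 'x::topological_space \<Rightarrow> 'x"
  assumes "compact (UNIV :: 'x set)" "p \<in> cp_alg \<alpha>" "kadj p = p" "kmult p p = p"
    and "continuous_on UNIV w" "kmult (kfun \<alpha> (\<lambda>y. complex_of_real (w y))) p = p"
    "kmult p (kfun \<alpha> (\<lambda>y. complex_of_real (w y))) = p"
  shows "kpos (crossed_prod \<alpha>) (ksub (kfun \<alpha> (\<lambda>y. complex_of_real ((w y)\<^sup>2))) p)"
proof -
  define q where "q = kfun \<alpha> (\<lambda>y. complex_of_real (w y))"
  define d where "d = ksub q p"
  obtain S where p: "kband p S" using cp_alg_kband[OF assms(2)] by blast
  have q: "kband q {0}" unfolding q_def by (rule kband_kfun)
  have "kadj d = d" by (simp add: d_def q_def kadj_ksub kadj_kfun assms(3))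
  moreover have "kmult d d = ksub (kfun \<alpha> (\<lambda>y. complex_of_real ((w y)\<^sup>2))) p"
  proof -
    have qp: "kmult q p = p" "kmult p q = p" using assms(6,7) by (simp_all add: q_def)
    have "kmult d d = ksub (ksub (kmult q q) (kmult p q)) (ksub (kmult q p) (kmult p p))"
      unfolding d_def kmult_ksub_left[OF q p] kmult_ksub_right[OF q p] ..
    also have "\<dots> = ksub (kmult q q) p"
      unfolding qp assms(4) by (simp add: ksub_def)
    finally show ?thesis by (simp add: q_def kmult_kfun_kfun power2_eq_square)
  qed
  moreover have "d \<in> crossed_prod \<alpha>"
    unfolding d_def q_def using assms(2,5)
    by (intro subsetD[OF cp_alg_subset_crossed_prod[OF assms(1)]] cp_alg_ksub cp_alg_kfun)
      simp_all
  ultimately show ?thesis unfolding kpos_def by metis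
qed

lemma hereditary_subalg_kfun_le:
  fixes \<alpha> :: "'g::group_add \<Rightarrow> 'x::topological_space \<Rightarrow> 'x"
  assumes "compact (UNIV :: 'x set)" "hereditary_subalg (crossed_prod \<alpha>) B"
    and "kfun \<alpha> (\<lambda>y. complex_of_real (\<phi> y)) \<in> B" "continuous_on UNIV \<phi>"
    and "continuous_on UNIV f" "\<And>y. 0 \<le> f y" "\<And>y. f y \<le> c * \<phi> y"
  shows "kfun \<alpha> (\<lambda>y. complex_of_real (f y)) \<in> B"
proof -
  have "(\<lambda>x g h. complex_of_real c * kfun \<alpha> (\<lambda>y. complex_of_real (\<phi> y)) x g h) \<in> B"
    using assms(2,3) unfolding hereditary_subalg_def cstar_subalg_def by blast
  moreover have "(\<lambda>x g h. complex_of_real c * kfun \<alpha> (\<lambda>y. complex_of_real (\<phi> y)) x g h)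
      = kfun \<alpha> (\<lambda>y. complex_of_real (c * \<phi> y))"
    by (auto simp: kfun_def fun_eq_iff)
  ultimately have c\<phi>: "kfun \<alpha> (\<lambda>y. complex_of_real (c * \<phi> y)) \<in> B" by simp
  have "ksub (kfun \<alpha> (\<lambda>y. complex_of_real (c * \<phi> y))) (kfun \<alpha> (\<lambda>y. complex_of_real (f y)))
      = kfun \<alpha> (\<lambda>y. complex_of_real (c * \<phi> y - f y))"
    by (auto simp: ksub_def kfun_def fun_eq_iff)
  moreover have "kpos (crossed_prod \<alpha>) (kfun \<alpha> (\<lambda>y. complex_of_real (c * \<phi> y - f y)))"
    using assms(4,5,7)
    by (intro kpos_kfun[OF assms(1)] continuous_on_diff continuous_on_mult continuous_on_const) simp_all
  moreover have "kfun \<alpha> (\<lambda>y. complex_of_real (f y)) \<in> crossed_prod \<alpha>"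
    using assms(5) by (intro subsetD[OF cp_alg_subset_crossed_prod[OF assms(1)]] cp_alg_kfun) simp
  ultimately show ?thesis
    using assms(2) kpos_kfun[OF assms(1,5,6)] c\<phi> unfolding hereditary_subalg_def by metis
qed

lemma projection_mem_hereditary_gen:
  fixes \<alpha> :: "'g::group_add \<Rightarrow> 'x::topological_space \<Rightarrow> 'x"
  assumes "compact (UNIV :: 'x set)" "continuous_on UNIV \<phi>" "\<And>y. 0 \<le> \<phi> y" "0 < \<delta>"
    and "p \<in> cp_alg \<alpha>" "kadj p = p" "kmult p p = p"
    and "\<And>x g h. p x g h \<noteq> 0 \<Longrightarrow> \<delta> \<le> \<phi> (\<alpha> g x) \<and> \<delta> \<le> \<phi> (\<alpha> h x)"
  shows "p \<in> hereditary_gen (crossed_prod \<alpha>) (kfun \<alpha> (\<lambda>y. complex_of_real (\<phi> y)))"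
  unfolding hereditary_gen_def
proof (intro InterI, elim CollectE conjE)
  fix B assume B: "hereditary_subalg (crossed_prod \<alpha>) B"
    and \<phi>B: "kfun \<alpha> (\<lambda>y. complex_of_real (\<phi> y)) \<in> B"
  define f where "f = (\<lambda>y. min 1 (\<phi> y / \<delta>))"
  have f: "continuous_on UNIV f" "\<And>y. 0 \<le> f y"
    unfolding f_def using assms(2-4) by (auto intro!: continuous_on_min continuous_on_divide)
  have fB: "kfun \<alpha> (\<lambda>y. complex_of_real (f y)) \<in> B"
    using assms(4) by (intro hereditary_subalg_kfun_le[OF assms(1) B \<phi>B assms(2) f, of "1 / \<delta>"])
      (simp add: f_def)
  have f1: "f (\<alpha> g x) = 1" "f (\<alpha> h x) = 1" if "p x g h \<noteq> 0" for x g h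
    using assms(8)[OF that] assms(4) by (simp_all add: f_def)
  have "kpos (crossed_prod \<alpha>) (ksub (kfun \<alpha> (\<lambda>y. complex_of_real ((sqrt (f y))\<^sup>2))) p)"
  proof (rule kpos_ksub_projection[OF assms(1,5,6,7)])
    show "continuous_on UNIV (\<lambda>y. sqrt (f y))" by (rule continuous_on_real_sqrt[OF f(1)])
    show "kmult (kfun \<alpha> (\<lambda>y. complex_of_real (sqrt (f y)))) p = p"
      unfolding kmult_kfun_left
    proof (intro ext)
      fix x g h show "complex_of_real (sqrt (f (\<alpha> g x))) * p x g h = p x g h"
        by (cases "p x g h = 0") (simp_all add: f1)
    qed
    show "kmult p (kfun \<alpha> (\<lambda>y. complex_of_real (sqrt (f y)))) = p"
      unfolding kmult_kfun_right
    proof (intro ext)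
      fix x g h show "p x g h * complex_of_real (sqrt (f (\<alpha> h x))) = p x g h"
        by (cases "p x g h = 0") (simp_all add: f1)
    qed
  qed
  then have "kpos (crossed_prod \<alpha>) (ksub (kfun \<alpha> (\<lambda>y. complex_of_real (f y))) p)"
    using f(2) by simp
  moreover have pA: "p \<in> crossed_prod \<alpha>" using cp_alg_subset_crossed_prod[OF assms(1)] assms(5) by blast
  moreover have "kpos (crossed_prod \<alpha>) p" unfolding kpos_def using pA assms(6,7) by metis
  ultimately show "p \<in> B" using B fB unfolding hereditary_subalg_def by blast
qed

lemma partition_isometry_range_mem_hereditary_gen:
  fixes \<alpha> :: "'g::group_add \<Rightarrow> 'x::topological_space \<Rightarrow> 'x"
  assumes "compact (UNIV :: 'x set)" "cont_action \<alpha>" "translating_partition \<alpha> W S H"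
    and "continuous_on UNIV \<phi>" "\<And>y. 0 \<le> \<phi> y" "0 < \<delta>" "\<And>y. y \<in> W \<Longrightarrow> \<delta> \<le> \<phi> y"
  shows "kmult (partition_isometry \<alpha> H) (kadj (partition_isometry \<alpha> H))
           \<in> hereditary_gen (crossed_prod \<alpha>) (kfun \<alpha> (\<lambda>y. complex_of_real (\<phi> y)))"
proof -
  let ?v = "partition_isometry \<alpha> H"
  have v: "?v \<in> cp_alg \<alpha>" by (rule partition_isometry_cp_alg[OF assms(2,3)])
  obtain B where "kband ?v B" using cp_alg_kband[OF v] by blast
  note projection = isometry_range_projection[OF this partition_isometry_isometric[OF assms(2,3)]]
  show ?thesis
  proof (rule projection_mem_hereditary_gen[OF assms(1,4,5,6) _ projection])
    show "kmult ?v (kadj ?v) \<in> cp_alg \<alpha>" using v by (intro cp_alg_kmult cp_alg_kadj assms(2))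
    show "\<delta> \<le> \<phi> (\<alpha> g x) \<and> \<delta> \<le> \<phi> (\<alpha> h x)" if "kmult ?v (kadj ?v) x g h \<noteq> 0" for x g h
      using partition_isometry_range[OF assms(2,3) that] assms(7) by blast
  qed
qed

theorem lemma3p2:
  fixes \<alpha> :: "'g::{group_add, countable} \<Rightarrow> 'x::t2_space \<Rightarrow> 'x"
    and \<phi> :: "'x \<Rightarrow> real"
  assumes "infinite (UNIV :: 'g set)"
    and "infinite (UNIV :: 'x set)"
    and "compact (UNIV :: 'x set)"
    and "cont_action \<alpha>"
    and "dyn_comparison \<alpha>"
    and "\<not> (\<exists>M. regular_borel_prob M \<and> invariant_measure \<alpha> M)"
    and "continuous_on UNIV \<phi>"
    and "\<forall>x. \<phi> x \<ge> 0"
    and "\<phi> \<noteq> (\<lambda>_. 0)"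
  shows "\<exists>v\<in>crossed_prod \<alpha>. kmult (kadj v) v = kid
           \<and> kmult v (kadj v) \<in> hereditary_gen (crossed_prod \<alpha>) (kfun \<alpha> (\<lambda>x. complex_of_real (\<phi> x)))"
proof -
  obtain x0 where "\<phi> x0 \<noteq> 0" using assms(9) by auto
  define \<delta> where "\<delta> = \<phi> x0 / 2"
  define W where "W = \<phi> -` {\<delta><..}"
  have "0 < \<delta>" using \<open>\<phi> x0 \<noteq> 0\<close> assms(8) by (simp add: \<delta>_def order_less_le)
  have "open W" unfolding W_def by (rule open_vimage[OF _ assms(7)]) simp
  moreover have "x0 \<in> W" using \<open>0 < \<delta>\<close> by (simp add: W_def \<delta>_def)
  ultimately have "subeq_closed \<alpha> UNIV W"
    by (intro subeq_closed_of_no_invariant_measure[OF assms(5,6)]) auto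
  then obtain S H where P: "translating_partition \<alpha> W S H"
    using translating_partition_of_subeq_closed[OF assms(3)] by blast
  define v where "v = partition_isometry \<alpha> H"
  have "v \<in> crossed_prod \<alpha>"
    using partition_isometry_cp_alg[OF assms(4) P] cp_alg_subset_crossed_prod[OF assms(3)]
    by (auto simp: v_def)
  moreover have "kmult (kadj v) v = kid"
    unfolding v_def by (rule partition_isometry_isometric[OF assms(4) P])
  moreover have "kmult v (kadj v) \<in> hereditary_gen (crossed_prod \<alpha>) (kfun \<alpha> (\<lambda>x. complex_of_real (\<phi> x)))"
    unfolding v_def using assms(8) \<open>0 < \<delta>\<close>
    by (intro partition_isometry_range_mem_hereditary_gen[OF assms(3,4) P assms(7)]) (auto simp: W_def)
  ultimately show ?thesis by blast
qed

end
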